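(* For every $n\ge 1$ and every unit interval order $U\in\mathcal U_n$, we have $a(U)=\zeta(p(U))$.
   Context: Unit interval orders: let $\mathcal I=\{I_1,\dots,I_n\}$ be a set of $n$ closed intervals of length $1$ in $\mathbb R$, numbered from left to right. The poset $U(\mathcal I)$ on $\{1,\dots,n\}$ is defined by $i\prec j$ iff $I_i$ lies strictly to the left of $I_j$ (the right endpoint of $I_i$ is less than the left endpoint of $I_j$). A unit interval order is a relation on $\{1,\dots,n\}$ arising in this way; $\mathcal U_n$ denotes the set of unit interval orders on $\{1,\dots,n\}$. Dyck paths: a Dyck path of length $n$ is a lattice path from $(0,0)$ to $(n,n)$ with steps $(0,1)$ (up, letter $a$) and $(1,0)$ (right, letter $b$) never going below the line $y=x$; $\mathcal D_n$ is the set of them. For $1\le i<j\le n$ the box $(i,j)$ is the unit square $[i-1,i]\times[j-1,j]$. The area set of a Dyck path is the set of boxes lying between the path and the diagonal. The area sequence $(a_1,\dots,a_n)$ records, for each horizontal row from bottom to top, the number of boxes of the area set in that row; area sequences of Dyck paths are exactly the nonnegative integer sequences with $a_1=0$ and $a_i\le a_{i-1}+1$. The map $a$: for $U\in\mathcal U_n$ with order $\prec$, $a(U)$ is the Dyck path whose area set is $\{(i,j): 1\le i<j\le n,\ i\not\prec j\}$. Part listings: for a sequence $w=(w_1,\dots,w_n)$ of nonnegative integers, $P(w)$ is the poset on $\{1,\dots,n\}$ with $i\prec j$ iff either $w_j-w_i\ge 2$, or $w_j-w_i=1$ and $i<j$. It is a fact (established in the paper) that for every $U\in\mathcal U_n$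 there is a unique sequence $w$ which is the area sequence of a Dyck path and such that $P(w)$ is isomorphic (as a poset) to $U$; $p(U)$ denotes the Dyck path with this area sequence. The zeta map $\zeta:\mathcal D_n\to\mathcal D_n$: given $D$, label the top endpoint of each up step of $D$ by $a$ and the right endpoint of each right step by $b$. Read these labels first along the line $y=x$ from bottom-left to top-right, then along $y=x+1$ in the same direction, then along $y=x+2$, etc. Interpreting each $b$ read as an up step and each $a$ read as a right step yields the lattice path $\zeta(D)$ from $(0,0)$ to $(n,n)$ (which is a Dyck path). *)

theory Defs
  imports Complex_Main "HOL-Library.Product_Lexorder"
begin

definition unit_interval_order :: "nat \<Rightarrow> (nat \<times> nat) set \<Rightarrow> bool" where
  "unit_interval_order n U \<longleftrightarrow>
     (\<exists>x :: nat \<Rightarrow> real. strict_mono_on {1..n} x \<and>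
        U = {(i, j). i \<in> {1..n} \<and> j \<in> {1..n} \<and> x i + 1 < x j})"

text \<open>Up = (0,1) step (letter a), Rt = (1,0) step (letter b).\<close>
datatype step = Up | Rt

definition cnt :: "step \<Rightarrow> step list \<Rightarrow> nat" where
  "cnt s xs = length (filter (\<lambda>t. t = s) xs)"

definition dyck :: "nat \<Rightarrow> step list \<Rightarrow> bool" where
  "dyck n D \<longleftrightarrow> length D = 2 * n \<and> cnt Up D = n \<and>
     (\<forall>k \<le> length D. cnt Rt (take k D) \<le> cnt Up (take k D))"

text \<open>Position (0-based index in the list) of the j-th up step, j \<ge> 1.\<close>
definition up_pos :: "step list \<Rightarrow> nat \<Rightarrow> nat" where
  "up_pos D j = filter (\<lambda>k. D ! k = Up) [0..<length D] ! (j - 1)"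

text \<open>x-coordinate of the j-th up step (the one in row j, i.e. from y = j-1 to y = j).\<close>
definition up_x :: "step list \<Rightarrow> nat \<Rightarrow> nat" where
  "up_x D j = cnt Rt (take (up_pos D j) D)"

text \<open>Area set: box (i,j) = [i-1,i]\<times>[j-1,j] with 1 \<le> i < j \<le> n lies between the path
  and the diagonal iff it lies to the right of the up step of row j.\<close>
definition area_set :: "nat \<Rightarrow> step list \<Rightarrow> (nat \<times> nat) set" where
  "area_set n D = {(i, j). 1 \<le> i \<and> i < j \<and> j \<le> n \<and> up_x D j < i}"

definition area_seq :: "nat \<Rightarrow> step list \<Rightarrow> nat \<Rightarrow> nat" where
  "area_seq n D j = card {i. (i, j) \<in> area_set n D}"

definition a_map :: "nat \<Rightarrow> (nat \<times> nat) set \<Rightarrow> step list" where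
  "a_map n U = (THE D. dyck n D \<and>
      area_set n D = {(i, j). 1 \<le> i \<and> i < j \<and> j \<le> n \<and> (i, j) \<notin> U})"

definition part_poset :: "nat \<Rightarrow> (nat \<Rightarrow> nat) \<Rightarrow> (nat \<times> nat) set" where
  "part_poset n w = {(i, j). i \<in> {1..n} \<and> j \<in> {1..n} \<and>
      (int (w j) - int (w i) \<ge> 2 \<or> (int (w j) - int (w i) = 1 \<and> i < j))}"

definition poset_iso :: "nat \<Rightarrow> (nat \<times> nat) set \<Rightarrow> (nat \<times> nat) set \<Rightarrow> bool" where
  "poset_iso n R S \<longleftrightarrow> (\<exists>f. bij_betw f {1..n} {1..n} \<and>
      (\<forall>i \<in> {1..n}. \<forall>j \<in> {1..n}. (i, j) \<in> R \<longleftrightarrow> (f i, f j) \<in> S))"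

definition p_map :: "nat \<Rightarrow> (nat \<times> nat) set \<Rightarrow> step list" where
  "p_map n U = (THE D. dyck n D \<and> poset_iso n (part_poset n (area_seq n D)) U)"

text \<open>Step t (1-based) ends at the point (pt_x D t, pt_y D t); its label is D ! (t-1)
  (a for Up, b for Rt). Labels are read diagonal by diagonal (y - x = 0, 1, 2, ...),
  each diagonal from bottom-left to top-right (increasing x).\<close>

definition pt_x :: "step list \<Rightarrow> nat \<Rightarrow> nat" where
  "pt_x D t = cnt Rt (take t D)"

definition pt_y :: "step list \<Rightarrow> nat \<Rightarrow> nat" where
  "pt_y D t = cnt Up (take t D)"

fun swap_step :: "step \<Rightarrow> step" where
  "swap_step Up = Rt"
| "swap_step Rt = Up"

definition zeta :: "step list \<Rightarrow> step list" where
  "zeta D = map (\<lambda>t. swap_step (D ! (t - 1)))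
     (sort_key (\<lambda>t. (pt_y D t - pt_x D t, pt_x D t)) [1..<length D + 1])"

end

theory Submission
  imports Defs "HOL-Library.Multiset"
begin

text \<open>
  Let \<open>w\<close> be the area sequence of a Dyck path \<open>D\<close>. Label the up step of row \<open>j\<close> by
  \<open>(w j + 1, j)\<close> and the first right step after it that returns to the diagonal \<open>y = x + w j\<close>
  by \<open>(w j, j)\<close>. The first component is the diagonal on which the step ends, and along each
  diagonal the second component increases from bottom-left to top-right. So \<open>\<zeta> D\<close>, which reads
  the steps diagonal by diagonal, is the "area word" of \<open>w\<close>: the \<open>2n\<close> labelled steps sorted by
  label, with directions swapped. In the area word, the up step of the row of rank \<open>(w i, i)\<close>
  has exactly the predecessors of \<open>i\<close> in \<open>P(w)\<close> to its left; hence \<open>P(w)\<close> is isomorphic to the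
  unit interval order whose area set is that of \<open>\<zeta> D\<close>.

  The part listing \<open>P(w)\<close> of an area sequence determines \<open>w\<close>: \<open>w i\<close> is the length of the longest
  chain ending in \<open>i\<close>, and at the first place where two sequences differ, counting elements by
  level and by number of predecessors on the level below tells them apart. Hence \<open>\<zeta>\<close> is
  injective, and so bijective on the finite set of Dyck paths. Every unit interval order \<open>U\<close> is
  the order of the Dyck path \<open>E = a(U)\<close>; choosing \<open>D\<close> with \<open>\<zeta> D = E\<close> gives \<open>P(w) \<cong> U\<close>, so
  \<open>p(U) = D\<close> and \<open>a(U) = E = \<zeta>(p(U))\<close>.
\<close>

lemma cnt_eq_card: "cnt s xs = card {i. i < length xs \<and> xs ! i = s}"
  by (simp add: cnt_def length_filter_conv_card)

lemma cnt_take_eq_card: "cnt s (take m xs) = card {i. i < m \<and> i < length xs \<and> xs ! i = s}"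
  unfolding cnt_eq_card by (rule arg_cong[where f = card]) auto

lemma cnt_Up_add_cnt_Rt: "cnt Up xs + cnt Rt xs = length xs"
proof (induction xs)
  case (Cons x xs)
  then show ?case by (cases x) (auto simp: cnt_def)
qed (simp add: cnt_def)

lemma cnt_map_distinct:
  assumes "distinct xs"
  shows "cnt s (map f xs) = card {x \<in> set xs. f x = s}"
proof -
  have "cnt s (map f xs) = length (filter (\<lambda>x. f x = s) xs)"
    by (simp add: cnt_def filter_map o_def)
  also have "\<dots> = card (set (filter (\<lambda>x. f x = s) xs))"
    using assms by (metis distinct_card distinct_filter)
  finally show ?thesis by simp
qed

lemma cnt_take_mono: "m \<le> m' \<Longrightarrow> cnt s (take m xs) \<le> cnt s (take m' xs)"
  unfolding cnt_take_eq_card by (rule card_mono) auto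

lemma cnt_take_Suc:
  "q < length xs \<Longrightarrow> cnt s (take (Suc q) xs) = cnt s (take q xs) + (if xs ! q = s then 1 else 0)"
  by (simp add: take_Suc_conv_app_nth cnt_def)

lemma set_take_strict_sorted:
  fixes key :: "'a \<Rightarrow> 'b::linorder"
  assumes "sorted_wrt (<) (map key xs)" "q < length xs"
  shows "set (take q xs) = {y \<in> set xs. key y < key (xs ! q)}"
proof -
  have less: "key (xs ! i) < key (xs ! j) \<longleftrightarrow> i < j" if "i < length xs" "j < length xs" for i j
    using assms(1) that sorted_wrt_nth_less[OF assms(1), of j i]
      sorted_wrt_nth_less[OF assms(1), of i j]
    by (cases i j rule: linorder_cases) auto
  show ?thesis
  proof (intro equalityI subsetI)
    fix y assume "y \<in> set (take q xs)"
    then obtain i where "i < q" "y = xs ! i"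
      using assms(2) by (auto simp: in_set_conv_nth)
    then show "y \<in> {y \<in> set xs. key y < key (xs ! q)}"
      using less assms(2) by auto
  next
    fix y assume "y \<in> {y \<in> set xs. key y < key (xs ! q)}"
    then obtain i where "i < length xs" "y = xs ! i" "key y < key (xs ! q)"
      by (auto simp: in_set_conv_nth)
    then show "y \<in> set (take q xs)"
      using less assms(2) by (auto simp: in_set_conv_nth intro!: exI[of _ i])
  qed
qed

lemma strict_sorted_sort_key:
  assumes "distinct xs" "inj_on key (set xs)"
  shows "sorted_wrt (<) (map key (sort_key key xs))"
  using assms sorted_sort_key[of key xs] by (simp add: strict_sorted_iff distinct_map)

lemma card_less_strict_sorted:
  fixes key :: "'a \<Rightarrow> 'b::linorder"
  assumes "sorted_wrt (<) (map key xs)" "q < length xs" "distinct xs"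
  shows "card {y \<in> set xs. key y < key (xs ! q)} = q"
  using set_take_strict_sorted[OF assms(1,2)] assms(2,3) distinct_card[of "take q xs"] by simp

section \<open>Up steps of Dyck paths\<close>

definition up_positions :: "step list \<Rightarrow> nat list" where
  "up_positions D = filter (\<lambda>k. D ! k = Up) [0..<length D]"

lemma sorted_up_positions: "sorted_wrt (<) (up_positions D)"
  unfolding up_positions_def by (rule sorted_wrt_filter) (rule sorted_wrt_upt)

lemma distinct_up_positions: "distinct (up_positions D)"
  unfolding up_positions_def by simp

lemma set_up_positions: "set (up_positions D) = {k. k < length D \<and> D ! k = Up}"
  unfolding up_positions_def by auto

lemma length_up_positions: "length (up_positions D) = cnt Up D"
  unfolding up_positions_def cnt_eq_card
  by (auto simp: length_filter_conv_card intro!: arg_cong[where f = card])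

lemma up_pos_eq_nth: "up_pos D j = up_positions D ! (j - 1)"
  unfolding up_pos_def up_positions_def by simp

lemma cnt_Up_take_eq_card: "cnt Up (take p D) = card {k \<in> set (up_positions D). k < p}"
  unfolding cnt_take_eq_card set_up_positions by (rule arg_cong[where f = card]) auto

lemma cnt_Up_take_nth_up_positions:
  "i < length (up_positions D) \<Longrightarrow> cnt Up (take (up_positions D ! i) D) = i"
  unfolding cnt_Up_take_eq_card
  using card_less_strict_sorted[of id "up_positions D" i] sorted_up_positions distinct_up_positions
  by simp

lemma
  assumes "1 \<le> r" "r \<le> cnt Up D"
  shows up_pos_less_length: "up_pos D r < length D"
    and nth_up_pos: "D ! up_pos D r = Up"
    and cnt_Up_take_up_pos: "cnt Up (take (up_pos D r) D) = r - 1"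
proof -
  have r: "r - 1 < length (up_positions D)"
    using assms length_up_positions[of D] by simp
  then have "up_positions D ! (r - 1) \<in> set (up_positions D)"
    by simp
  then show "up_pos D r < length D" "D ! up_pos D r = Up"
    unfolding up_pos_eq_nth set_up_positions by auto
  show "cnt Up (take (up_pos D r) D) = r - 1"
    unfolding up_pos_eq_nth using cnt_Up_take_nth_up_positions[OF r] .
qed

lemma up_pos_strict_mono:
  assumes "1 \<le> r" "r < r'" "r' \<le> cnt Up D"
  shows "up_pos D r < up_pos D r'"
  unfolding up_pos_eq_nth
  using sorted_wrt_nth_less[OF sorted_up_positions, of "r - 1" "r' - 1" D] assms
    length_up_positions[of D]
  by simp

lemma up_pos_eqI:
  assumes "q < length D" "D ! q = Up" "cnt Up (take q D) = j - 1" "1 \<le> j"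
  shows "up_pos D j = q"
proof -
  have "q \<in> set (up_positions D)"
    using assms set_up_positions by auto
  then obtain i where i: "i < length (up_positions D)" "up_positions D ! i = q"
    by (auto simp: in_set_conv_nth)
  then have "i = j - 1"
    using cnt_Up_take_nth_up_positions[OF i(1)] assms(3) by simp
  then show ?thesis
    using i unfolding up_pos_eq_nth by simp
qed

lemma ex_up_pos:
  assumes "k < length D" "D ! k = Up"
  obtains r where "1 \<le> r" "r \<le> cnt Up D" "up_pos D r = k"
proof -
  have "k \<in> set (up_positions D)"
    using assms set_up_positions by auto
  then obtain i where "i < length (up_positions D)" "up_positions D ! i = k"
    by (auto simp: in_set_conv_nth)
  then show ?thesis
    using that[of "Suc i"] length_up_positions[of D] unfolding up_pos_eq_nth by simp
qed

lemma up_pos_eq_up_x: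
  assumes "1 \<le> r" "r \<le> cnt Up D"
  shows "up_pos D r = up_x D r + (r - 1)"
  using cnt_Up_add_cnt_Rt[of "take (up_pos D r) D"] up_pos_less_length[OF assms]
    cnt_Up_take_up_pos[OF assms] unfolding up_x_def by simp

lemma pt_x_add_pt_y: "t \<le> length D \<Longrightarrow> pt_x D t + pt_y D t = t"
  unfolding pt_x_def pt_y_def using cnt_Up_add_cnt_Rt[of "take t D"] by simp

lemma pt_y_eq_card:
  assumes "t \<le> length D"
  shows "pt_y D t = card {r. 1 \<le> r \<and> r \<le> cnt Up D \<and> up_pos D r < t}"
proof -
  let ?R = "{r. 1 \<le> r \<and> r \<le> cnt Up D \<and> up_pos D r < t}"
  have "{k. k < t \<and> k < length D \<and> D ! k = Up} = up_pos D ` ?R"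
    using up_pos_less_length nth_up_pos by (auto elim!: ex_up_pos intro: image_eqI)
  moreover have "inj_on (up_pos D) ?R"
    by (rule inj_onI) (metis (no_types, lifting) mem_Collect_eq nat_neq_iff up_pos_strict_mono)
  ultimately show ?thesis
    unfolding pt_y_def cnt_take_eq_card by (simp add: card_image)
qed

lemma dyck_length: "dyck n D \<Longrightarrow> length D = 2 * n"
  and dyck_cnt_Up: "dyck n D \<Longrightarrow> cnt Up D = n"
  unfolding dyck_def by auto

lemma dyckI:
  assumes "length D = 2 * n" "cnt Up D = n"
    and "\<And>q. q < length D \<Longrightarrow> D ! q = Rt \<Longrightarrow> cnt Rt (take (Suc q) D) \<le> cnt Up (take (Suc q) D)"
  shows "dyck n D"
proof -
  have "cnt Rt (take k D) \<le> cnt Up (take k D)" if "k \<le> length D" for k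
    using that
  proof (induction k)
    case (Suc k)
    then show ?case
      using assms(3)[of k] cnt_take_Suc[of k D] by (cases "D ! k") auto
  qed (simp add: cnt_def)
  then show ?thesis
    unfolding dyck_def using assms by simp
qed

lemma up_x_less:
  assumes "dyck n D" "1 \<le> r" "r \<le> n"
  shows "up_x D r < r"
proof -
  have r: "r \<le> cnt Up D"
    using dyck_cnt_Up[OF assms(1)] assms by simp
  have "cnt Rt (take (up_pos D r) D) \<le> cnt Up (take (up_pos D r) D)"
    using assms(1) up_pos_less_length[OF assms(2) r] unfolding dyck_def by simp
  then show ?thesis
    using cnt_Up_take_up_pos[OF assms(2) r] assms(2) unfolding up_x_def by simp
qed

lemma up_x_mono:
  assumes "dyck n D" "1 \<le> r" "r \<le> r'" "r' \<le> n"
  shows "up_x D r \<le> up_x D r'"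
proof (cases "r = r'")
  case False
  then have "up_pos D r < up_pos D r'"
    using up_pos_strict_mono[of r r' D] assms dyck_cnt_Up[OF assms(1)] by simp
  then show ?thesis
    unfolding up_x_def by (simp add: cnt_take_mono)
qed simp

lemma dyck_eqI:
  assumes "dyck n D" "dyck n D'" "\<And>r. 1 \<le> r \<Longrightarrow> r \<le> n \<Longrightarrow> up_x D r = up_x D' r"
  shows "D = D'"
proof -
  have Up_transfer: "E' ! k = Up"
    if E: "dyck n E" "dyck n E'" "\<And>r. 1 \<le> r \<Longrightarrow> r \<le> n \<Longrightarrow> up_x E r = up_x E' r"
      and k: "k < length E" "E ! k = Up" for E E' k
  proof -
    obtain r where r: "1 \<le> r" "r \<le> n" "up_pos E r = k"
      using ex_up_pos[OF k] dyck_cnt_Up[OF E(1)] by metis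
    then have "up_pos E' r = k"
      using up_pos_eq_up_x[of r E] up_pos_eq_up_x[of r E'] E dyck_cnt_Up by simp
    then show ?thesis
      using nth_up_pos[of r E'] r dyck_cnt_Up[OF E(2)] by simp
  qed
  have "D ! k = Up \<longleftrightarrow> D' ! k = Up" if "k < length D" for k
    using Up_transfer[OF assms(1,2,3)] Up_transfer[OF assms(2,1)] assms(3) that
      dyck_length[OF assms(1)] dyck_length[OF assms(2)] by metis
  then show ?thesis
    using dyck_length[OF assms(1)] dyck_length[OF assms(2)]
    by (intro nth_equalityI) (simp, metis step.exhaust)
qed

lemma area_seq_eq:
  assumes "1 \<le> r" "r \<le> n"
  shows "area_seq n D r = r - 1 - up_x D r"
proof -
  have "{i. (i, r) \<in> area_set n D} = {up_x D r<..<r}"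
    using assms unfolding area_set_def by auto
  then show ?thesis
    unfolding area_seq_def by simp
qed

lemma up_x_eq_area_seq:
  assumes "dyck n D" "1 \<le> r" "r \<le> n"
  shows "up_x D r = r - Suc (area_seq n D r)"
  using area_seq_eq[OF assms(2,3)] up_x_less[OF assms] by simp

lemma area_seq_less:
  assumes "dyck n D" "1 \<le> r" "r \<le> n"
  shows "area_seq n D r < r"
  using area_seq_eq[OF assms(2,3)] assms(2) by simp

lemma finite_dyck: "finite {D. dyck n D}"
proof (rule finite_subset)
  show "{D. dyck n D} \<subseteq> {xs. set xs \<subseteq> {Up, Rt} \<and> length xs = 2 * n}"
    using dyck_length by (auto intro: step.exhaust)
  show "finite {xs. set xs \<subseteq> {Up, Rt} \<and> length xs = 2 * n}"
    by (rule finite_lists_length_eq) simp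
qed

section \<open>Words obtained by sorting labelled items\<close>

lemma cnt_take_map_sort_key:
  fixes key :: "'a \<Rightarrow> 'b::linorder"
  assumes "distinct xs" "inj_on key (set xs)" "q < length xs"
  shows "cnt s (take q (map lab (sort_key key xs))) =
    card {y \<in> set xs. key y < key (sort_key key xs ! q) \<and> lab y = s}"
proof -
  have "cnt s (take q (map lab (sort_key key xs))) =
      card {y \<in> set (take q (sort_key key xs)). lab y = s}"
    using assms(1) by (simp add: take_map cnt_map_distinct)
  then show ?thesis
    using set_take_strict_sorted[OF strict_sorted_sort_key[OF assms(1,2)], of q] assms(3) by simp
qed

lemma cnt_take_Suc_map_sort_key:
  fixes key :: "'a \<Rightarrow> 'b::linorder"
  assumes "distinct xs" "inj_on key (set xs)" "q < length xs"
  shows "cnt s (take (Suc q) (map lab (sort_key key xs))) =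
    card {y \<in> set xs. key y \<le> key (sort_key key xs ! q) \<and> lab y = s}"
proof -
  let ?S = "sort_key key xs"
  have mem: "?S ! q \<in> set xs"
    using assms(3) by (metis length_sort nth_mem set_sort)
  have "{y \<in> set xs. key y \<le> key (?S ! q) \<and> lab y = s} =
      {y \<in> set xs. key y < key (?S ! q) \<and> lab y = s} \<union> (if lab (?S ! q) = s then {?S ! q} else {})"
    using mem assms(2) by (auto simp: order.order_iff_strict dest: inj_onD)
  then show ?thesis
    using cnt_take_map_sort_key[OF assms, of s lab] cnt_take_Suc[of q "map lab ?S" s] assms(3) mem
    by (simp add: card_insert_if)
qed

definition items :: "nat \<Rightarrow> (nat \<times> step) list" where
  "items n = map (\<lambda>i. (i, Up)) [1..<n + 1] @ map (\<lambda>i. (i, Rt)) [1..<n + 1]"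

lemma distinct_items: "distinct (items n)"
  unfolding items_def by (auto simp: distinct_map inj_on_def)

lemma set_items: "set (items n) = {1..n} \<times> UNIV"
proof -
  have "(j, s) \<in> set (items n) \<longleftrightarrow> j \<in> {1..n}" for j s
    unfolding items_def by (cases s) auto
  then show ?thesis
    by auto
qed

lemma length_items: "length (items n) = 2 * n"
  unfolding items_def by simp

lemma card_items_snd_eq:
  "card {y \<in> set (items n). P y \<and> snd y = s} = card {j \<in> {1..n}. P (j, s)}"
proof -
  have "{y \<in> set (items n). P y \<and> snd y = s} = (\<lambda>j. (j, s)) ` {j \<in> {1..n}. P (j, s)}"
    unfolding set_items by force
  then show ?thesis
    by (simp add: card_image inj_on_def)
qed

definition item_word :: "(nat \<times> step \<Rightarrow> 'a::linorder) \<Rightarrow> nat \<Rightarrow> step list" where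
  "item_word key n = map snd (sort_key key (items n))"

lemma length_item_word: "length (item_word key n) = 2 * n"
  unfolding item_word_def by (simp add: length_items)

lemma cnt_Up_item_word: "cnt Up (item_word key n) = n"
proof -
  have "cnt Up (item_word key n) = card {y \<in> set (items n). True \<and> snd y = Up}"
    unfolding item_word_def by (simp add: cnt_map_distinct distinct_items)
  also have "\<dots> = card {j \<in> {1..n}. True}"
    unfolding card_items_snd_eq ..
  also have "{j \<in> {1..n}. True} = {1..n}"
    by blast
  finally show ?thesis
    by simp
qed

lemma nth_item_word: "q < 2 * n \<Longrightarrow> item_word key n ! q = snd (sort_key key (items n) ! q)"
  unfolding item_word_def by (simp add: length_items)

lemma cnt_take_item_word:
  assumes "inj_on key (set (items n))" "q < 2 * n"
  shows "cnt s (take q (item_word key n)) =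
    card {j \<in> {1..n}. key (j, s) < key (sort_key key (items n) ! q)}"
proof -
  have q: "q < length (items n)"
    using assms(2) by (simp add: length_items)
  show ?thesis
    unfolding item_word_def cnt_take_map_sort_key[OF distinct_items assms(1) q] card_items_snd_eq ..
qed

lemma cnt_take_Suc_item_word:
  assumes "inj_on key (set (items n))" "q < 2 * n"
  shows "cnt s (take (Suc q) (item_word key n)) =
    card {j \<in> {1..n}. key (j, s) \<le> key (sort_key key (items n) ! q)}"
proof -
  have q: "q < length (items n)"
    using assms(2) by (simp add: length_items)
  show ?thesis
    unfolding item_word_def cnt_take_Suc_map_sort_key[OF distinct_items assms(1) q]
      card_items_snd_eq ..
qed

lemma dyck_item_word:
  assumes inj: "inj_on key (set (items n))"
    and Up_before_Rt: "\<And>j. j \<in> {1..n} \<Longrightarrow> key (j, Up) < key (j, Rt)"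
  shows "dyck n (item_word key n)"
proof (rule dyckI[OF length_item_word cnt_Up_item_word])
  fix q assume "q < length (item_word key n)"
  then have q: "q < 2 * n"
    by (simp add: length_item_word)
  let ?x = "sort_key key (items n) ! q"
  have "{j \<in> {1..n}. key (j, Rt) \<le> key ?x} \<subseteq> {j \<in> {1..n}. key (j, Up) \<le> key ?x}"
    using Up_before_Rt by (auto dest: order.strict_implies_order intro: order_trans)
  then show "cnt Rt (take (Suc q) (item_word key n)) \<le> cnt Up (take (Suc q) (item_word key n))"
    unfolding cnt_take_Suc_item_word[OF inj q] by (intro card_mono) auto
qed

lemma up_x_item_word:
  assumes inj: "inj_on key (set (items n))" and i: "i \<in> {1..n}"
    and r: "r = Suc (card {j \<in> {1..n}. key (j, Up) < key (i, Up)})"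
  shows "up_x (item_word key n) r = card {j \<in> {1..n}. key (j, Rt) < key (i, Up)}"
proof -
  let ?S = "sort_key key (items n)"
  have "(i, Up) \<in> set ?S"
    using i by (simp add: set_items)
  then obtain q where q: "q < 2 * n" "?S ! q = (i, Up)"
    by (metis in_set_conv_nth length_items length_sort)
  have "up_pos (item_word key n) r = q"
    using q r cnt_take_item_word[OF inj q(1), of Up]
    by (intro up_pos_eqI) (simp_all add: length_item_word nth_item_word)
  then show ?thesis
    unfolding up_x_def using cnt_take_item_word[OF inj q(1), of Rt] q(2) by simp
qed

section \<open>Part listings of area sequences are unique\<close>

definition is_area_seq :: "nat \<Rightarrow> (nat \<Rightarrow> nat) \<Rightarrow> bool" where
  "is_area_seq n w \<longleftrightarrow> w 1 = 0 \<and> (\<forall>r. 1 \<le> r \<longrightarrow> r < n \<longrightarrow> w (Suc r) \<le> Suc (w r))"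

lemma is_area_seq_area_seq:
  assumes "dyck n D" "1 \<le> n"
  shows "is_area_seq n (area_seq n D)"
  unfolding is_area_seq_def
proof (intro conjI allI impI)
  show "area_seq n D 1 = 0"
    using area_seq_eq[of 1 n D] assms(2) by simp
  fix r assume r: "1 \<le> r" "r < n"
  then show "area_seq n D (Suc r) \<le> Suc (area_seq n D r)"
    using up_x_mono[OF assms(1), of r "Suc r"] up_x_less[OF assms(1), of r]
      area_seq_eq[of r n D] area_seq_eq[of "Suc r" n D] by simp
qed

lemma is_area_seq_crossing:
  assumes "is_area_seq n w" "1 \<le> p" "p < i" "i \<le> n" "w p < v" "v \<le> w i"
  shows "\<exists>s. p \<le> s \<and> s < i \<and> Suc (w s) = v"
  using assms(3-6)
proof (induction i rule: less_induct)
  case (less i)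
  then obtain i' where i': "i = Suc i'" "p \<le> i'"
    by (cases i) auto
  have step: "w i \<le> Suc (w i')"
    using assms(1,2) i' less.prems unfolding is_area_seq_def by simp
  show ?case
  proof (cases "w i' < v")
    case True
    then show ?thesis
      using step less.prems i' by (intro exI[of _ i']) auto
  next
    case False
    then have "p < i'"
      using less.prems i' by (cases "p = i'") auto
    then show ?thesis
      using less.IH[of i'] False less.prems i' by fastforce
  qed
qed

lemma is_area_seq_pred:
  assumes "is_area_seq n w" "1 \<le> i" "i \<le> n" "0 < w i"
  shows "\<exists>j. 1 \<le> j \<and> j < i \<and> Suc (w j) = w i"
proof -
  have "w 1 = 0"
    using assms(1) unfolding is_area_seq_def by simp
  then have "1 < i"
    using assms by (cases "i = 1") auto
  then show ?thesis
    using is_area_seq_crossing[OF assms(1), of 1 i "w i"] assms \<open>w 1 = 0\<close> by auto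
qed

definition poset_iso_via :: "nat \<Rightarrow> (nat \<Rightarrow> nat) \<Rightarrow> (nat \<times> nat) set \<Rightarrow> (nat \<times> nat) set \<Rightarrow> bool" where
  "poset_iso_via n f R S \<longleftrightarrow> bij_betw f {1..n} {1..n} \<and>
      (\<forall>i \<in> {1..n}. \<forall>j \<in> {1..n}. (i, j) \<in> R \<longleftrightarrow> (f i, f j) \<in> S)"

lemma poset_iso_iff_via: "poset_iso n R S \<longleftrightarrow> (\<exists>f. poset_iso_via n f R S)"
  unfolding poset_iso_def poset_iso_via_def by simp

lemma poset_iso_via_inv:
  assumes "poset_iso_via n f R S"
  shows "poset_iso_via n (inv_into {1..n} f) S R"
proof -
  have f: "bij_betw f {1..n} {1..n}"
    using assms unfolding poset_iso_via_def by simp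
  then have g: "bij_betw (inv_into {1..n} f) {1..n} {1..n}"
    by (rule bij_betw_inv_into)
  have "(i, j) \<in> S \<longleftrightarrow> (inv_into {1..n} f i, inv_into {1..n} f j) \<in> R"
    if "i \<in> {1..n}" "j \<in> {1..n}" for i j
    using assms that bij_betw_apply[OF g] bij_betw_inv_into_right[OF f]
    unfolding poset_iso_via_def by metis
  with g show ?thesis
    unfolding poset_iso_via_def by blast
qed

lemma poset_iso_via_comp:
  assumes "poset_iso_via n f R S" "poset_iso_via n g S T"
  shows "poset_iso_via n (g \<circ> f) R T"
proof -
  have f: "bij_betw f {1..n} {1..n}" and g: "bij_betw g {1..n} {1..n}"
    using assms unfolding poset_iso_via_def by auto
  have "(i, j) \<in> R \<longleftrightarrow> ((g \<circ> f) i, (g \<circ> f) j) \<in> T" if "i \<in> {1..n}" "j \<in> {1..n}" for i j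
    using assms that bij_betw_apply[OF f] unfolding poset_iso_via_def by simp
  then show ?thesis
    unfolding poset_iso_via_def using bij_betw_trans[OF f g] by blast
qed

lemma poset_iso_sym: "poset_iso n R S \<Longrightarrow> poset_iso n S R"
  unfolding poset_iso_iff_via by (blast intro: poset_iso_via_inv)

lemma poset_iso_trans: "poset_iso n R S \<Longrightarrow> poset_iso n S T \<Longrightarrow> poset_iso n R T"
  unfolding poset_iso_iff_via by (blast intro: poset_iso_via_comp)

inductive has_chain :: "(nat \<times> nat) set \<Rightarrow> nat \<Rightarrow> nat \<Rightarrow> bool" for R where
  has_chain_0: "has_chain R 0 i"
| has_chain_Suc: "has_chain R k j \<Longrightarrow> (j, i) \<in> R \<Longrightarrow> has_chain R (Suc k) i"

lemma has_chain_part_poset_le: "has_chain (part_poset n w) k i \<Longrightarrow> k \<le> w i"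
  by (induction rule: has_chain.induct) (auto simp: part_poset_def)

lemma has_chain_part_poset:
  assumes "is_area_seq n w" "1 \<le> i" "i \<le> n" "k \<le> w i"
  shows "has_chain (part_poset n w) k i"
  using assms(2-4)
proof (induction k arbitrary: i)
  case 0
  show ?case
    by (rule has_chain_0)
next
  case (Suc k)
  then obtain j where j: "1 \<le> j" "j < i" "Suc (w j) = w i"
    using is_area_seq_pred[OF assms(1), of i] by auto
  then have "(j, i) \<in> part_poset n w"
    using Suc.prems unfolding part_poset_def by auto
  moreover have "has_chain (part_poset n w) k j"
    using Suc j by simp
  ultimately show ?case
    by (blast intro: has_chain_Suc)
qed

lemma has_chain_poset_iso_via:
  assumes "poset_iso_via n f R S" "R \<subseteq> {1..n} \<times> {1..n}" "has_chain R k i" "i \<in> {1..n}"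
  shows "has_chain S k (f i)"
  using assms(3,4)
proof (induction rule: has_chain.induct)
  case (has_chain_0 i)
  show ?case
    by (rule has_chain.has_chain_0)
next
  case (has_chain_Suc k j i)
  then have "j \<in> {1..n}" "(f j, f i) \<in> S"
    using assms(1,2) unfolding poset_iso_via_def by blast+
  with has_chain_Suc show ?case
    by (auto intro: has_chain.has_chain_Suc)
qed

text \<open>In the part listing of an area sequence \<open>w\<close>, the longest chain ending in \<open>i\<close> has length
  \<open>w i\<close>; hence isomorphisms of part listings preserve the entries.\<close>

lemma poset_iso_via_part_poset_eq:
  assumes "is_area_seq n w" "is_area_seq n w'"
    and "poset_iso_via n f (part_poset n w) (part_poset n w')"
    and "i \<in> {1..n}"
  shows "w' (f i) = w i"
proof -
  have le: "v i \<le> v' (g i)"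
    if "is_area_seq n v" "poset_iso_via n g (part_poset n v) (part_poset n v')" "i \<in> {1..n}"
    for v v' g i
  proof -
    have "has_chain (part_poset n v) (v i) i"
      using has_chain_part_poset[OF that(1)] that(3) by simp
    then have "has_chain (part_poset n v') (v i) (g i)"
      using has_chain_poset_iso_via[OF that(2)] that(3) part_poset_def by fastforce
    then show ?thesis
      by (rule has_chain_part_poset_le)
  qed
  have f: "bij_betw f {1..n} {1..n}"
    using assms(3) unfolding poset_iso_via_def by simp
  have "w' (f i) \<le> w (inv_into {1..n} f (f i))"
    using le[OF assms(2) poset_iso_via_inv[OF assms(3)]] bij_betw_apply[OF f assms(4)] .
  then show ?thesis
    using le[OF assms(1,3,4)] bij_betw_inv_into_left[OF f assms(4)] by simp
qed

definition pred_count :: "(nat \<Rightarrow> nat) \<Rightarrow> nat \<Rightarrow> nat" where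
  "pred_count w i = card {j. 1 \<le> j \<and> j < i \<and> Suc (w j) = w i}"

definition level_count :: "nat \<Rightarrow> (nat \<Rightarrow> nat) \<Rightarrow> nat \<Rightarrow> nat \<Rightarrow> nat" where
  "level_count n w v c = card {i \<in> {1..n}. w i = v \<and> pred_count w i \<le> c}"

lemma pred_count_part_poset:
  assumes "i \<le> n"
  shows "pred_count w i = card {j \<in> {1..n}. (j, i) \<in> part_poset n w \<and> Suc (w j) = w i}"
  unfolding pred_count_def
  by (rule arg_cong[where f = card]) (use assms in \<open>auto simp: part_poset_def\<close>)

lemma poset_iso_via_pred_count:
  assumes "is_area_seq n w" "is_area_seq n w'"
    and "poset_iso_via n f (part_poset n w) (part_poset n w')"
    and "i \<in> {1..n}"
  shows "pred_count w' (f i) = pred_count w i"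
proof -
  have f: "bij_betw f {1..n} {1..n}"
    using assms(3) unfolding poset_iso_via_def by simp
  have "bij_betw f {j \<in> {1..n}. (j, i) \<in> part_poset n w \<and> Suc (w j) = w i}
      {j \<in> {1..n}. (j, f i) \<in> part_poset n w' \<and> Suc (w' j) = w' (f i)}"
    using assms poset_iso_via_part_poset_eq[OF assms(1-3)]
    by (intro bij_betw_Collect[OF f]) (auto simp: poset_iso_via_def)
  then show ?thesis
    using bij_betw_same_card pred_count_part_poset[of i n w] pred_count_part_poset[of "f i" n w']
      assms(4) bij_betw_apply[OF f assms(4)] by fastforce
qed

lemma poset_iso_level_count:
  assumes "is_area_seq n w" "is_area_seq n w'" "poset_iso n (part_poset n w) (part_poset n w')"
  shows "level_count n w v c = level_count n w' v c"
proof -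
  obtain f where iso: "poset_iso_via n f (part_poset n w) (part_poset n w')"
    using assms(3) poset_iso_iff_via by blast
  then have f: "bij_betw f {1..n} {1..n}"
    unfolding poset_iso_via_def by simp
  have "bij_betw f {i \<in> {1..n}. w i = v \<and> pred_count w i \<le> c}
      {i \<in> {1..n}. w' i = v \<and> pred_count w' i \<le> c}"
    using poset_iso_via_part_poset_eq[OF assms(1,2) iso] poset_iso_via_pred_count[OF assms(1,2) iso]
    by (intro bij_betw_Collect[OF f]) auto
  then show ?thesis
    unfolding level_count_def by (rule bij_betw_same_card)
qed

text \<open>At the first index \<open>p\<close> where two area sequences differ, say \<open>w p < w' p = v\<close>, the
  entry \<open>p\<close> is counted by \<open>w'\<close> at level \<open>v\<close>; every later entry of \<open>w\<close> at level \<open>v\<close> has, by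
  the crossing property, one more predecessor at level \<open>v - 1\<close> than \<open>p\<close> has in \<open>w'\<close>.\<close>

lemma level_count_first_difference:
  assumes w: "is_area_seq n w" and p: "1 \<le> p" "p \<le> n"
    and below: "\<And>j. 1 \<le> j \<Longrightarrow> j < p \<Longrightarrow> w j = w' j" and less: "w p < w' p"
  shows "level_count n w (w' p) (pred_count w' p) < level_count n w' (w' p) (pred_count w' p)"
proof -
  define v where "v = w' p"
  define c where "c = pred_count w' p"
  define A where "A = {i \<in> {1..<p}. w' i = v \<and> pred_count w' i \<le> c}"
  have pred_count_below: "pred_count w i = pred_count w' i" if "1 \<le> i" "i < p" for i
    unfolding pred_count_def using below that by (intro arg_cong[where f = card]) auto
  have c: "c = card {j. 1 \<le> j \<and> j < p \<and> Suc (w j) = v}"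
    unfolding c_def v_def pred_count_def using below by (intro arg_cong[where f = card]) auto
  have "{i \<in> {1..n}. w i = v \<and> pred_count w i \<le> c} \<subseteq> A"
  proof
    fix i assume i: "i \<in> {i \<in> {1..n}. w i = v \<and> pred_count w i \<le> c}"
    have "\<not> p \<le> i"
    proof
      assume "p \<le> i"
      then have "p < i"
        using i less v_def by (cases "p = i") auto
      then obtain s where s: "p \<le> s" "s < i" "Suc (w s) = v"
        using is_area_seq_crossing[OF w p(1)] i less v_def by force
      have "insert s {j. 1 \<le> j \<and> j < p \<and> Suc (w j) = v} \<subseteq> {j. 1 \<le> j \<and> j < i \<and> Suc (w j) = w i}"
        using s i p by auto
      then have "card (insert s {j. 1 \<le> j \<and> j < p \<and> Suc (w j) = v}) \<le> pred_count w i"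
        unfolding pred_count_def by (intro card_mono) auto
      then show False
        using s i c by simp
    qed
    then show "i \<in> A"
      using i below pred_count_below unfolding A_def by auto
  qed
  then have "level_count n w v c \<le> card A"
    unfolding level_count_def A_def by (intro card_mono) auto
  also have "\<dots> < card (insert p A)"
    unfolding A_def by (simp add: card_insert_disjoint)
  also have "\<dots> \<le> level_count n w' v c"
    unfolding level_count_def A_def using p v_def c_def by (intro card_mono) auto
  finally show ?thesis
    unfolding v_def c_def .
qed

theorem part_poset_iso_imp_eq:
  assumes "is_area_seq n w" "is_area_seq n w'" "poset_iso n (part_poset n w) (part_poset n w')"
  shows "\<forall>i \<in> {1..n}. w i = w' i"
proof (rule ccontr)
  assume "\<not> ?thesis"
  then have ex: "\<exists>p. 1 \<le> p \<and> p \<le> n \<and> w p \<noteq> w' p"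
    by auto
  define p where "p = (LEAST p. 1 \<le> p \<and> p \<le> n \<and> w p \<noteq> w' p)"
  have p: "1 \<le> p" "p \<le> n" "w p \<noteq> w' p"
    using LeastI_ex[OF ex] unfolding p_def by auto
  have below: "w j = w' j" if "1 \<le> j" "j < p" for j
    using not_less_Least[of j "\<lambda>p. 1 \<le> p \<and> p \<le> n \<and> w p \<noteq> w' p"] that p unfolding p_def by auto
  have counts: "level_count n w v c = level_count n w' v c" for v c
    by (rule poset_iso_level_count[OF assms])
  show False
  proof (cases "w p < w' p")
    case True
    then show False
      using level_count_first_difference[OF assms(1) p(1,2) below] counts by fastforce
  next
    case False
    then have "w' p < w p"
      using p by simp
    then show False
      using level_count_first_difference[OF assms(2) p(1,2), of w] below counts by fastforce
  qed
qed

lemma dyck_eq_if_part_poset_iso: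
  assumes "1 \<le> n" "dyck n D" "dyck n D'"
    and "poset_iso n (part_poset n (area_seq n D)) (part_poset n (area_seq n D'))"
  shows "D = D'"
proof (rule dyck_eqI[OF assms(2,3)])
  fix r assume "1 \<le> r" "r \<le> n"
  then show "up_x D r = up_x D' r"
    using part_poset_iso_imp_eq[OF is_area_seq_area_seq[OF assms(2,1)]
        is_area_seq_area_seq[OF assms(3,1)] assms(4)]
      up_x_eq_area_seq[OF assms(2)] up_x_eq_area_seq[OF assms(3)] by simp
qed

section \<open>The part listing as the order of a Dyck path\<close>

fun area_key :: "(nat \<Rightarrow> nat) \<Rightarrow> nat \<times> step \<Rightarrow> nat \<times> nat" where
  "area_key w (j, Up) = (w j, j)"
| "area_key w (j, Rt) = (Suc (w j), j)"

definition area_word :: "nat \<Rightarrow> (nat \<Rightarrow> nat) \<Rightarrow> step list" where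
  "area_word n w = item_word (area_key w) n"

lemma inj_area_key: "inj (area_key w)"
proof (rule injI)
  fix x y assume "area_key w x = area_key w y"
  then show "x = y"
    by (cases x; cases y; cases "snd x"; cases "snd y") auto
qed

lemma dyck_area_word: "dyck n (area_word n w)"
  unfolding area_word_def by (rule dyck_item_word) (auto intro: inj_on_subset[OF inj_area_key])

definition rank_on :: "nat \<Rightarrow> (nat \<Rightarrow> 'a::linorder) \<Rightarrow> nat \<Rightarrow> nat" where
  "rank_on n k i = Suc (card {j \<in> {1..n}. k j < k i})"

lemma rank_on_less:
  assumes "i \<in> {1..n}" "k i < k j"
  shows "rank_on n k i < rank_on n k j"
proof -
  have "insert i {l \<in> {1..n}. k l < k i} \<subseteq> {l \<in> {1..n}. k l < k j}"
    using assms by auto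
  then have "card (insert i {l \<in> {1..n}. k l < k i}) \<le> card {l \<in> {1..n}. k l < k j}"
    by (intro card_mono) auto
  then show ?thesis
    unfolding rank_on_def by (simp add: card_insert_disjoint)
qed

lemma rank_on_mem:
  assumes "i \<in> {1..n}"
  shows "rank_on n k i \<in> {1..n}"
proof -
  have "card {j \<in> {1..n}. k j < k i} \<le> card ({1..n} - {i})"
    by (intro card_mono) auto
  then show ?thesis
    using assms unfolding rank_on_def by auto
qed

lemma bij_betw_rank_on:
  assumes "inj_on k {1..n}"
  shows "bij_betw (rank_on n k) {1..n} {1..n}"
proof -
  have "inj_on (rank_on n k) {1..n}"
  proof (rule inj_onI)
    fix i j assume ij: "i \<in> {1..n}" "j \<in> {1..n}" "rank_on n k i = rank_on n k j"
    then have "k i = k j"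
      using rank_on_less[of i n k j] rank_on_less[of j n k i]
      by (cases "k i" "k j" rule: linorder_cases) auto
    then show "i = j"
      using assms ij by (auto dest: inj_onD)
  qed
  moreover have "rank_on n k ` {1..n} \<subseteq> {1..n}"
    using rank_on_mem by blast
  ultimately show ?thesis
    unfolding bij_betw_def using endo_inj_surj[of "{1..n}" "rank_on n k"] by simp
qed

lemma rank_on_le_card_iff:
  assumes "inj_on k {1..n}" "A \<subseteq> {1..n}" "i \<in> {1..n}"
    and down: "\<And>i j. i \<in> A \<Longrightarrow> j \<in> {1..n} \<Longrightarrow> k j \<le> k i \<Longrightarrow> j \<in> A"
  shows "rank_on n k i \<le> card A \<longleftrightarrow> i \<in> A"
proof
  assume "i \<in> A"
  then have "insert i {j \<in> {1..n}. k j < k i} \<subseteq> A"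
    using down by auto
  then have "card (insert i {j \<in> {1..n}. k j < k i}) \<le> card A"
    using assms(2) by (intro card_mono) (auto intro: finite_subset)
  then show "rank_on n k i \<le> card A"
    unfolding rank_on_def by (simp add: card_insert_disjoint)
next
  assume le: "rank_on n k i \<le> card A"
  show "i \<in> A"
  proof (rule ccontr)
    assume "i \<notin> A"
    then have "A \<subseteq> {j \<in> {1..n}. k j < k i}"
      using assms(2,3) down by (auto simp: not_less[symmetric])
    then have "card A \<le> card {j \<in> {1..n}. k j < k i}"
      by (intro card_mono) auto
    then show False
      using le unfolding rank_on_def by simp
  qed
qed

lemma up_x_area_word:
  assumes "i \<in> {1..n}"
  shows "up_x (area_word n w) (rank_on n (\<lambda>j. (w j, j)) i) =
    card {j \<in> {1..n}. (Suc (w j), j) < (w i, i)}"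
  unfolding area_word_def rank_on_def
  using up_x_item_word[OF inj_on_subset[OF inj_area_key] assms] by simp

text \<open>The relation whose \<open>a\<close>-image is \<open>E\<close>: the boxes above \<open>E\<close>.\<close>

definition path_order :: "nat \<Rightarrow> step list \<Rightarrow> (nat \<times> nat) set" where
  "path_order n E = {(i, j). 1 \<le> i \<and> i < j \<and> j \<le> n \<and> (i, j) \<notin> area_set n E}"

lemma mem_path_order: "(i, j) \<in> path_order n E \<longleftrightarrow> 1 \<le> i \<and> i < j \<and> j \<le> n \<and> i \<le> up_x E j"
  unfolding path_order_def area_set_def by auto

text \<open>Row \<open>rank (w i, i)\<close> of the area word has exactly the predecessors of \<open>i\<close> in the part
  listing to the left of its up step, and these form an initial segment of ranks.\<close>

lemma part_poset_iso_path_order_area_word: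
  "poset_iso_via n (rank_on n (\<lambda>j. (w j, j))) (part_poset n w) (path_order n (area_word n w))"
proof -
  define k where "k j = (w j, j)" for j
  define \<sigma> where "\<sigma> = rank_on n k"
  define down where "down j = {i \<in> {1..n}. (Suc (w i), i) < k j}" for j
  have k: "inj_on k {1..n}"
    unfolding k_def by (auto simp: inj_on_def)
  have up_x: "up_x (area_word n w) (\<sigma> j) = card (down j)" if "j \<in> {1..n}" for j
    unfolding \<sigma>_def k_def down_def using up_x_area_word[OF that] .
  have part: "(i, j) \<in> part_poset n w \<longleftrightarrow> i \<in> down j" if "i \<in> {1..n}" "j \<in> {1..n}" for i j
    using that unfolding part_poset_def down_def k_def by auto
  have rank_le: "\<sigma> i \<le> card (down j) \<longleftrightarrow> i \<in> down j" if "i \<in> {1..n}" "j \<in> {1..n}" for i j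
    unfolding \<sigma>_def
  proof (rule rank_on_le_card_iff[OF k _ that(1)])
    fix a b assume a: "a \<in> down j" and b: "b \<in> {1..n}" "k b \<le> k a"
    then have "(Suc (w b), b) \<le> (Suc (w a), a)"
      unfolding k_def by (simp add: less_eq_prod_def)
    with a b(1) show "b \<in> down j"
      unfolding down_def by (blast intro: order.strict_trans1)
  qed (auto simp: down_def)
  have "(i, j) \<in> part_poset n w \<longleftrightarrow> (\<sigma> i, \<sigma> j) \<in> path_order n (area_word n w)"
    if ij: "i \<in> {1..n}" "j \<in> {1..n}" for i j
  proof
    assume "(i, j) \<in> part_poset n w"
    then have down: "i \<in> down j"
      using part ij by simp
    then have "k i < k j"
      unfolding down_def k_def by (auto intro: less_trans[of "(w i, i)" "(Suc (w i), i)"])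
    then have "\<sigma> i < \<sigma> j"
      unfolding \<sigma>_def by (rule rank_on_less[OF ij(1)])
    with down show "(\<sigma> i, \<sigma> j) \<in> path_order n (area_word n w)"
      using rank_on_mem[OF ij(1), of k] rank_on_mem[OF ij(2), of k] rank_le[OF ij] up_x[OF ij(2)]
      unfolding \<sigma>_def by (simp add: mem_path_order)
  next
    assume "(\<sigma> i, \<sigma> j) \<in> path_order n (area_word n w)"
    then show "(i, j) \<in> part_poset n w"
      using up_x[OF ij(2)] rank_le[OF ij] part[OF ij] by (simp add: mem_path_order)
  qed
  moreover have "bij_betw \<sigma> {1..n} {1..n}"
    unfolding \<sigma>_def by (rule bij_betw_rank_on[OF k])
  ultimately show ?thesis
    unfolding poset_iso_via_def \<sigma>_def k_def by blast
qed

section \<open>Zeta and area words\<close>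

lemma pt_y_Suc:
  "t < length D \<Longrightarrow> pt_y D (Suc t) = pt_y D t + (if D ! t = Up then 1 else 0)"
  unfolding pt_y_def by (rule cnt_take_Suc)

lemma up_step_end:
  assumes "1 \<le> r" "r \<le> cnt Up D"
  shows "pt_y D (Suc (up_pos D r)) = r" "pt_x D (Suc (up_pos D r)) = up_x D r"
proof -
  show y: "pt_y D (Suc (up_pos D r)) = r"
    using pt_y_Suc[OF up_pos_less_length[OF assms]] nth_up_pos[OF assms]
      cnt_Up_take_up_pos[OF assms] assms(1)
    unfolding pt_y_def by simp
  show "pt_x D (Suc (up_pos D r)) = up_x D r"
    using pt_x_add_pt_y[of "Suc (up_pos D r)" D] y up_pos_less_length[OF assms]
      up_pos_eq_up_x[OF assms] assms(1)
    by simp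
qed

lemma right_step_end:
  assumes D: "dyck n D" and XY: "1 \<le> X" "X \<le> n" "Y \<le> n"
    and left: "\<And>r. 1 \<le> r \<Longrightarrow> r \<le> Y \<Longrightarrow> up_x D r < X"
    and right: "\<And>r. Y < r \<Longrightarrow> r \<le> n \<Longrightarrow> X \<le> up_x D r"
  shows "D ! (X + Y - 1) = Rt" "pt_y D (X + Y) = Y" "pt_x D (X + Y) = X"
proof -
  have n: "cnt Up D = n" "length D = 2 * n"
    using dyck_cnt_Up[OF D] dyck_length[OF D] by auto
  have rows_before: "{r. 1 \<le> r \<and> r \<le> cnt Up D \<and> up_pos D r < t} = {1..Y}"
    if "t = X + Y \<or> t = X + Y - 1" for t
  proof -
    have low: "up_pos D r < X + Y - 1" if "1 \<le> r" "r \<le> Y" for r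
      using left[OF that] up_pos_eq_up_x[of r D] that XY n by simp
    have high: "X + Y \<le> up_pos D r" if "Y < r" "r \<le> n" for r
      using right[OF that] up_pos_eq_up_x[of r D] that n by simp
    show ?thesis
    proof (intro equalityI subsetI)
      fix r assume "r \<in> {r. 1 \<le> r \<and> r \<le> cnt Up D \<and> up_pos D r < t}"
      then show "r \<in> {1..Y}"
        using high[of r] that n by (cases "r \<le> Y") auto
    next
      fix r assume "r \<in> {1..Y}"
      then show "r \<in> {r. 1 \<le> r \<and> r \<le> cnt Up D \<and> up_pos D r < t}"
        using low[of r] that XY n by auto
    qed
  qed
  have t: "X + Y \<le> length D"
    using XY n by simp
  show y: "pt_y D (X + Y) = Y"
    using pt_y_eq_card[OF t] rows_before by simp
  have "pt_y D (X + Y - 1) = Y"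
    using pt_y_eq_card[of "X + Y - 1" D] t rows_before by simp
  moreover have "Suc (X + Y - 1) = X + Y"
    using XY(1) by simp
  ultimately have "D ! (X + Y - 1) \<noteq> Up"
    using pt_y_Suc[of "X + Y - 1" D] y t by (simp split: if_splits)
  then show "D ! (X + Y - 1) = Rt"
    using step.exhaust by blast
  show "pt_x D (X + Y) = X"
    using pt_x_add_pt_y[OF t] y by simp
qed

text \<open>\<open>run_end n w i\<close> is the last index of the run of entries after \<open>i\<close> that stay above \<open>w i\<close>.\<close>

definition run_end :: "nat \<Rightarrow> (nat \<Rightarrow> nat) \<Rightarrow> nat \<Rightarrow> nat" where
  "run_end n w i = (LEAST j. i < j \<and> (n < j \<or> w j \<le> w i)) - 1"

lemma
  assumes "i \<in> {1..n}"
  shows le_run_end: "i \<le> run_end n w i"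
    and run_end_le: "run_end n w i \<le> n"
    and less_run_end: "\<And>j. i < j \<Longrightarrow> j \<le> run_end n w i \<Longrightarrow> w i < w j"
    and Suc_run_end_le: "run_end n w i < n \<Longrightarrow> w (Suc (run_end n w i)) \<le> w i"
proof -
  let ?P = "\<lambda>j. i < j \<and> (n < j \<or> w j \<le> w i)"
  define m where "m = (LEAST j. ?P j)"
  have P: "?P (Suc n)"
    using assms by auto
  have m: "?P m" "m \<le> Suc n"
    unfolding m_def by (rule LeastI[of ?P, OF P], rule Least_le[of ?P, OF P])
  have r: "run_end n w i = m - 1"
    unfolding run_end_def m_def ..
  show "i \<le> run_end n w i" "run_end n w i \<le> n"
    using m r by auto
  show "w i < w j" if "i < j" "j \<le> run_end n w i" for j
    using not_less_Least[of j ?P] that m r unfolding m_def by fastforce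
  show "w (Suc (run_end n w i)) \<le> w i" if "run_end n w i < n"
    using that m r by (cases m) auto
qed

lemma run_end_less:
  assumes "i < j" "j \<le> n" "w j \<le> w i"
  shows "run_end n w i < j"
proof -
  let ?P = "\<lambda>j. i < j \<and> (n < j \<or> w j \<le> w i)"
  have P: "?P j"
    using assms by auto
  have "i < (LEAST j. ?P j)"
    using LeastI[of ?P, OF P] by simp
  moreover have "(LEAST j. ?P j) \<le> j"
    by (rule Least_le[of ?P, OF P])
  ultimately show ?thesis
    unfolding run_end_def by simp
qed

lemma right_step_run_end:
  assumes D: "dyck n D" and j: "j \<in> {1..n}"
  defines "w \<equiv> area_seq n D"
  defines "Y \<equiv> run_end n w j"
  shows "2 * Y - w j \<in> {1..2 * n}" "D ! (2 * Y - w j - 1) = Rt"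
    and "pt_y D (2 * Y - w j) = Y" "pt_x D (2 * Y - w j) = Y - w j"
proof -
  have up_x: "up_x D r = r - Suc (w r)" if "1 \<le> r" "r \<le> n" for r
    unfolding w_def using up_x_eq_area_seq[OF D that] .
  have Y: "j \<le> Y" "Y \<le> n"
    using le_run_end[OF j] run_end_le[OF j] unfolding Y_def by auto
  have wj: "w j < j"
    using area_seq_less[OF D] j unfolding w_def by simp
  have "w j < w Y" if "j < Y"
    using less_run_end[OF j, where w = w and j = Y] that unfolding Y_def by blast
  with Y(1) have "w j \<le> w Y"
    by (cases "j = Y") auto
  then have left: "up_x D r < Y - w j" if "1 \<le> r" "r \<le> Y" for r
    using up_x_mono[OF D that] up_x[of Y] Y wj that by simp
  have right: "Y - w j \<le> up_x D r" if "Y < r" "r \<le> n" for r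
  proof -
    have "w (Suc Y) \<le> w j"
      using Suc_run_end_le[OF j, of w] that unfolding Y_def by simp
    then show ?thesis
      using up_x_mono[OF D, of "Suc Y" r] up_x[of "Suc Y"] that by simp
  qed
  have X: "1 \<le> Y - w j" "Y - w j \<le> n" and t: "2 * Y - w j = (Y - w j) + Y"
    using Y wj by auto
  show "2 * Y - w j \<in> {1..2 * n}"
    using X Y by simp arith
  show "D ! (2 * Y - w j - 1) = Rt" "pt_y D (2 * Y - w j) = Y" "pt_x D (2 * Y - w j) = Y - w j"
    unfolding t using right_step_end[OF D X Y(2) left right] by simp_all
qed

text \<open>Item \<open>x\<close> of the area word of the area sequence \<open>w\<close> of \<open>D\<close> is the step of \<open>D\<close> with the
  opposite direction that ends on diagonal \<open>item_level w x\<close> in row \<open>item_row n w x\<close>: \<open>(j, Rt)\<close> is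
  the up step of row \<open>j\<close>, and \<open>(i, Up)\<close> is the first right step after row \<open>i\<close> that ends on the
  diagonal \<open>w i\<close>.\<close>

definition item_level :: "(nat \<Rightarrow> nat) \<Rightarrow> nat \<times> step \<Rightarrow> nat" where
  "item_level w x = fst (area_key w x)"

fun item_row :: "nat \<Rightarrow> (nat \<Rightarrow> nat) \<Rightarrow> nat \<times> step \<Rightarrow> nat" where
  "item_row n w (j, Up) = run_end n w j"
| "item_row n w (j, Rt) = j"

definition item_pos :: "nat \<Rightarrow> (nat \<Rightarrow> nat) \<Rightarrow> nat \<times> step \<Rightarrow> nat" where
  "item_pos n w x = 2 * item_row n w x - item_level w x"

definition zeta_key :: "nat \<Rightarrow> (nat \<Rightarrow> nat) \<Rightarrow> nat \<times> step \<Rightarrow> nat \<times> nat" where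
  "zeta_key n w x = (item_level w x, item_row n w x - item_level w x)"

lemma item_level_simps [simp]: "item_level w (j, Up) = w j" "item_level w (j, Rt) = Suc (w j)"
  unfolding item_level_def by simp_all

lemma area_key_eq: "area_key w (j, s) = (item_level w (j, s), j)"
  by (cases s) simp_all

lemma item_level_le_row:
  assumes "\<And>r. r \<in> {1..n} \<Longrightarrow> w r < r" "j \<in> {1..n}"
  shows "item_level w (j, s) \<le> item_row n w (j, s)"
  using assms(1)[OF assms(2)] le_run_end[OF assms(2), of w] by (cases s) auto

lemma item_row_strict_mono:
  assumes "\<And>r. r \<in> {1..n} \<Longrightarrow> w r < r" "i \<in> {1..n}" "j \<in> {1..n}"
    and "item_level w (i, s) = item_level w (j, t)" "i < j"
  shows "item_row n w (i, s) < item_row n w (j, t)"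
  using assms(4,5) assms(1)[OF assms(2)] assms(1)[OF assms(3)] le_run_end[OF assms(3), of w]
    run_end_less[of i j n w] assms(3)
  by (cases s; cases t) auto

lemma zeta_key_strict_mono:
  assumes "\<And>r. r \<in> {1..n} \<Longrightarrow> w r < r" "i \<in> {1..n}" "j \<in> {1..n}"
    and "area_key w (i, s) < area_key w (j, t)"
  shows "zeta_key n w (i, s) < zeta_key n w (j, t)"
proof -
  have "item_level w (i, s) < item_level w (j, t) \<or>
      item_level w (i, s) = item_level w (j, t) \<and> i < j"
    using assms(4) unfolding area_key_eq by (auto simp: less_prod_def)
  then show ?thesis
    using item_row_strict_mono[OF assms(1-3), of s t] item_level_le_row[OF assms(1,2), of s]
    unfolding zeta_key_def by (auto simp: less_prod_def)
qed

lemma zeta_key_strict_mono_items: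
  assumes "\<And>r. r \<in> {1..n} \<Longrightarrow> w r < r" "x \<in> set (items n)" "y \<in> set (items n)"
    and "area_key w x < area_key w y"
  shows "zeta_key n w x < zeta_key n w y"
  using assms
    zeta_key_strict_mono[OF assms(1), where i = "fst x" and j = "fst y" and s = "snd x" and t = "snd y"]
  by (simp add: set_items mem_Times_iff)

lemma inj_on_zeta_key:
  assumes "\<And>r. r \<in> {1..n} \<Longrightarrow> w r < r"
  shows "inj_on (zeta_key n w) (set (items n))"
proof (rule inj_onI)
  fix x y assume xy: "x \<in> set (items n)" "y \<in> set (items n)" "zeta_key n w x = zeta_key n w y"
  then have "\<not> area_key w x < area_key w y" "\<not> area_key w y < area_key w x"
    using zeta_key_strict_mono_items[OF assms] by (metis order.irrefl)+
  then show "x = y"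
    using inj_area_key by (auto dest: injD)
qed

lemma item_step_end:
  assumes D: "dyck n D" and x: "x \<in> set (items n)"
  defines "w \<equiv> area_seq n D"
  shows "item_pos n w x \<in> {1..2 * n}" "swap_step (D ! (item_pos n w x - 1)) = snd x"
    and "(pt_y D (item_pos n w x) - pt_x D (item_pos n w x), pt_x D (item_pos n w x)) =
      zeta_key n w x"
proof -
  obtain j s where xjs: "x = (j, s)" and j: "j \<in> {1..n}"
    using x unfolding set_items by blast
  have w_less: "w r < r" if "r \<in> {1..n}" for r
    unfolding w_def using area_seq_less[OF D] that by simp
  have up_x: "up_x D j = j - Suc (w j)"
    unfolding w_def using up_x_eq_area_seq[OF D] j by simp
  have "item_pos n w x \<in> {1..2 * n} \<and> swap_step (D ! (item_pos n w x - 1)) = s \<and>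
      pt_y D (item_pos n w x) = item_row n w x \<and>
      pt_x D (item_pos n w x) = item_row n w x - item_level w x"
  proof (cases s)
    case Rt
    have r: "1 \<le> j" "j \<le> cnt Up D"
      using j dyck_cnt_Up[OF D] by auto
    have "item_pos n w x = Suc (up_pos D j)"
      using up_pos_eq_up_x[OF r] up_x w_less[OF j] unfolding item_pos_def xjs Rt by simp
    then show ?thesis
      using up_step_end[OF r] up_pos_less_length[OF r] nth_up_pos[OF r] up_x w_less[OF j]
        dyck_length[OF D] xjs Rt by simp
  next
    case Up
    then show ?thesis
      using right_step_run_end[OF D j] unfolding item_pos_def xjs w_def by simp
  qed
  then show "item_pos n w x \<in> {1..2 * n}" "swap_step (D ! (item_pos n w x - 1)) = snd x"
    and "(pt_y D (item_pos n w x) - pt_x D (item_pos n w x), pt_x D (item_pos n w x)) =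
      zeta_key n w x"
    using item_level_le_row[OF w_less j, of s] xjs unfolding zeta_key_def by auto
qed

lemma bij_betw_item_pos:
  assumes D: "dyck n D"
  shows "bij_betw (item_pos n (area_seq n D)) (set (items n)) {1..2 * n}"
proof -
  let ?pos = "item_pos n (area_seq n D)"
  have w_less: "\<And>r. r \<in> {1..n} \<Longrightarrow> area_seq n D r < r"
    using area_seq_less[OF D] by simp
  have "inj_on ?pos (set (items n))"
  proof (rule inj_onI)
    fix x y assume x: "x \<in> set (items n)" and y: "y \<in> set (items n)" and "?pos x = ?pos y"
    then have "zeta_key n (area_seq n D) x = zeta_key n (area_seq n D) y"
      using item_step_end(3)[OF D x] item_step_end(3)[OF D y] by simp
    then show "x = y"
      using inj_on_zeta_key[of n "area_seq n D", OF w_less] x y by (simp add: inj_on_eq_iff)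
  qed
  moreover have "?pos ` set (items n) = {1..2 * n}"
  proof (rule card_subset_eq)
    show "?pos ` set (items n) \<subseteq> {1..2 * n}"
      using item_step_end(1)[OF D] by blast
    show "card (?pos ` set (items n)) = card {1..2 * n}"
      using card_image[OF \<open>inj_on ?pos (set (items n))\<close>] distinct_card[OF distinct_items]
        length_items by simp
  qed simp
  ultimately show ?thesis
    unfolding bij_betw_def ..
qed

lemma sorted_zeta_key_sort_area_key:
  assumes "\<And>r. r \<in> {1..n} \<Longrightarrow> w r < r"
  shows "sorted (map (zeta_key n w) (sort_key (area_key w) (items n)))"
proof -
  have "sorted_wrt (\<lambda>x y. area_key w x < area_key w y) (sort_key (area_key w) (items n))"
    using strict_sorted_sort_key[OF distinct_items inj_on_subset[OF inj_area_key]]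
    by (simp add: sorted_wrt_map)
  then have "sorted_wrt (\<lambda>x y. zeta_key n w x \<le> zeta_key n w y) (sort_key (area_key w) (items n))"
    by (rule sorted_wrt_mono_rel[rotated])
      (use zeta_key_strict_mono_items[of n w, OF assms] in \<open>auto intro: less_imp_le\<close>)
  then show ?thesis
    by (simp add: sorted_wrt_map)
qed

theorem zeta_eq_area_word:
  assumes D: "dyck n D"
  shows "zeta D = area_word n (area_seq n D)"
proof -
  define w where "w = area_seq n D"
  define diag where "diag t = (pt_y D t - pt_x D t, pt_x D t)" for t
  define S where "S = sort_key (area_key w) (items n)"
  have w_less: "\<And>r. r \<in> {1..n} \<Longrightarrow> w r < r"
    unfolding w_def using area_seq_less[OF D] by simp
  have pos: "bij_betw (item_pos n w) (set S) {1..2 * n}"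
    using bij_betw_item_pos[OF D] unfolding S_def w_def by simp
  have positions: "set [1..<length D + 1] = item_pos n w ` set S"
    using bij_betw_imp_surj_on[OF pos] dyck_length[OF D] by auto
  have diag_pos: "diag (item_pos n w x) = zeta_key n w x" if "x \<in> set S" for x
    using item_step_end(3)[OF D] that unfolding S_def w_def diag_def by simp
  have "sort_key diag [1..<length D + 1] = map (item_pos n w) S"
  proof (rule sort_key_inj_key_eq)
    have "distinct (map (item_pos n w) S)"
      using pos distinct_items unfolding S_def by (simp add: distinct_map bij_betw_def)
    then show "mset [1..<length D + 1] = mset (map (item_pos n w) S)"
      using set_eq_iff_mset_eq_distinct[of "[1..<length D + 1]" "map (item_pos n w) S"] positions
      by simp
    have "inj_on (diag \<circ> item_pos n w) (set S)"
      using inj_on_zeta_key[of n w, OF w_less] diag_pos unfolding S_def inj_on_def by simp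
    then show "inj_on diag (set [1..<length D + 1])"
      unfolding positions by (rule inj_on_imageI)
    have "sorted (map (zeta_key n w) S)"
      unfolding S_def by (rule sorted_zeta_key_sort_area_key[of n w, OF w_less])
    also have "map (zeta_key n w) S = map diag (map (item_pos n w) S)"
      using diag_pos by simp
    finally show "sorted (map diag (map (item_pos n w) S))" .
  qed
  then have "zeta D = map (\<lambda>x. swap_step (D ! (item_pos n w x - 1))) S"
    unfolding zeta_def diag_def by simp
  also have "\<dots> = map snd S"
    using item_step_end(2)[OF D] by (simp add: S_def w_def)
  finally show ?thesis
    unfolding area_word_def item_word_def S_def w_def .
qed

section \<open>Unit interval orders are the orders of Dyck paths\<close>

definition staircase :: "nat \<Rightarrow> (nat \<times> nat) set \<Rightarrow> bool" where
  "staircase n R \<longleftrightarrow> R \<subseteq> {(i, j). 1 \<le> i \<and> i < j \<and> j \<le> n} \<and>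
     (\<forall>i j i' j'. (i, j) \<in> R \<longrightarrow> 1 \<le> i' \<longrightarrow> i' \<le> i \<longrightarrow> j \<le> j' \<longrightarrow> j' \<le> n \<longrightarrow> (i', j') \<in> R)"

lemma staircase_unit_interval_order:
  assumes "unit_interval_order n U"
  shows "staircase n U"
proof -
  obtain x :: "nat \<Rightarrow> real" where x: "strict_mono_on {1..n} x"
    and U: "U = {(i, j). i \<in> {1..n} \<and> j \<in> {1..n} \<and> x i + 1 < x j}"
    using assms unfolding unit_interval_order_def by blast
  have le: "x i \<le> x j" if "i \<in> {1..n}" "j \<in> {1..n}" "i \<le> j" for i j
    using x that unfolding strict_mono_on_def by (cases "i = j") (auto intro: less_imp_le)
  have less: "i < j" if "i \<in> {1..n}" "j \<in> {1..n}" "x i + 1 < x j" for i j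
  proof (rule ccontr)
    assume "\<not> i < j"
    then have "x j \<le> x i"
      using le[of j i] that by simp
    then show False
      using that(3) by simp
  qed
  show ?thesis
    unfolding staircase_def
  proof (intro conjI allI impI)
    show "U \<subseteq> {(i, j). 1 \<le> i \<and> i < j \<and> j \<le> n}"
      using less unfolding U by auto
    fix i j i' j' assume ij: "(i, j) \<in> U" "1 \<le> i'" "i' \<le> i" "j \<le> j'" "j' \<le> n"
    then have "i \<in> {1..n}" "j \<in> {1..n}" "x i + 1 < x j"
      unfolding U by auto
    moreover have "x i' \<le> x i" "x j \<le> x j'"
      using le[of i' i] le[of j j'] ij calculation by auto
    ultimately show "(i', j') \<in> U"
      unfolding U using ij by auto
  qed
qed

fun staircase_key :: "(nat \<Rightarrow> nat) \<Rightarrow> nat \<times> step \<Rightarrow> nat \<times> nat" where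
  "staircase_key d (j, Up) = (d j, j)"
| "staircase_key d (j, Rt) = (j, 0)"

text \<open>Sorting by \<open>staircase_key d\<close> puts the \<open>j\<close>-th right step before the up step of row \<open>i\<close>
  iff \<open>j \<le> d i\<close>.\<close>

lemma inj_on_staircase_key: "inj_on (staircase_key d) (set (items n))"
proof (rule inj_onI)
  fix x y assume xy: "x \<in> set (items n)" "y \<in> set (items n)" "staircase_key d x = staircase_key d y"
  obtain i s j t where "x = (i, s)" "y = (j, t)"
    by (cases x, cases y)
  with xy show "x = y"
    by (cases s; cases t) (auto simp: set_items)
qed

lemma up_x_item_word_staircase_key:
  assumes less: "\<And>j. j \<in> {1..n} \<Longrightarrow> d j < j"
    and mono: "\<And>j j'. 1 \<le> j \<Longrightarrow> j \<le> j' \<Longrightarrow> j' \<le> n \<Longrightarrow> d j \<le> d j'"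
    and i: "i \<in> {1..n}"
  shows "up_x (item_word (staircase_key d) n) i = d i"
proof -
  have "{j \<in> {1..n}. (d j, j) < (d i, i)} = {1..<i}"
  proof (intro equalityI subsetI)
    fix j assume j: "j \<in> {j \<in> {1..n}. (d j, j) < (d i, i)}"
    have "\<not> i \<le> j"
    proof
      assume "i \<le> j"
      then show False
        using mono[of i j] i j by (auto simp: less_prod_def)
    qed
    with j show "j \<in> {1..<i}"
      by simp
  next
    fix j assume "j \<in> {1..<i}"
    then show "j \<in> {j \<in> {1..n}. (d j, j) < (d i, i)}"
      using mono[of j i] i by (auto simp: less_prod_def)
  qed
  moreover have "{j \<in> {1..n}. (j, 0) < (d i, i)} = {1..d i}"
    using less[OF i] i by (auto simp: less_prod_def)
  moreover have "up_x (item_word (staircase_key d) n)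
      (Suc (card {j \<in> {1..n}. staircase_key d (j, Up) < staircase_key d (i, Up)})) =
      card {j \<in> {1..n}. staircase_key d (j, Rt) < staircase_key d (i, Up)}"
    by (rule up_x_item_word[OF inj_on_staircase_key i refl])
  ultimately show ?thesis
    using i by simp
qed

lemma path_order_staircase_word:
  assumes less: "\<And>j. j \<in> {1..n} \<Longrightarrow> d j < j"
    and mono: "\<And>j j'. 1 \<le> j \<Longrightarrow> j \<le> j' \<Longrightarrow> j' \<le> n \<Longrightarrow> d j \<le> d j'"
  shows "dyck n (item_word (staircase_key d) n)"
    and "path_order n (item_word (staircase_key d) n) = {(i, j). 1 \<le> i \<and> i \<le> d j \<and> j \<in> {1..n}}"
proof -
  show "dyck n (item_word (staircase_key d) n)"
    using less by (intro dyck_item_word inj_on_staircase_key) simp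
  have "(i, j) \<in> path_order n (item_word (staircase_key d) n) \<longleftrightarrow>
      1 \<le> i \<and> i \<le> d j \<and> j \<in> {1..n}" for i j
  proof (cases "1 \<le> j \<and> j \<le> n")
    case True
    then show ?thesis
      using up_x_item_word_staircase_key[OF less mono, where i = j and n = n] less[of j]
      by (auto simp: mem_path_order)
  qed (auto simp: mem_path_order)
  then show "path_order n (item_word (staircase_key d) n) = {(i, j). 1 \<le> i \<and> i \<le> d j \<and> j \<in> {1..n}}"
    by auto
qed

lemma downward_closed_eq_atLeastAtMost:
  fixes S :: "nat set"
  assumes "finite S" "\<And>i. i \<in> S \<Longrightarrow> 1 \<le> i" "\<And>i i'. i \<in> S \<Longrightarrow> 1 \<le> i' \<Longrightarrow> i' \<le> i \<Longrightarrow> i' \<in> S"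
  shows "S = {1..card S}"
proof (cases "S = {}")
  case False
  have "S = {1..Max S}"
  proof (intro equalityI subsetI)
    fix i assume "i \<in> S"
    then show "i \<in> {1..Max S}"
      using assms(2) Max_ge[OF assms(1)] by simp
  next
    fix i assume "i \<in> {1..Max S}"
    then show "i \<in> S"
      using assms(3)[OF Max_in[OF assms(1) False]] by simp
  qed
  then show ?thesis
    by (metis card_atLeastAtMost diff_Suc_1)
qed simp

lemma staircase_columns:
  assumes "staircase n R"
  obtains d where "\<And>j. j \<in> {1..n} \<Longrightarrow> d j < j"
    and "\<And>j j'. 1 \<le> j \<Longrightarrow> j \<le> j' \<Longrightarrow> j' \<le> n \<Longrightarrow> d j \<le> d j'"
    and "R = {(i, j). 1 \<le> i \<and> i \<le> d j \<and> j \<in> {1..n}}"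
proof -
  have R: "1 \<le> i \<and> i < j \<and> j \<le> n" if "(i, j) \<in> R" for i j
    using assms that unfolding staircase_def by auto
  have R_mono: "(i', j') \<in> R" if "(i, j) \<in> R" "1 \<le> i'" "i' \<le> i" "j \<le> j'" "j' \<le> n" for i j i' j'
    using assms that unfolding staircase_def by blast
  define d where "d j = card {i. (i, j) \<in> R}" for j
  have column: "{i. (i, j) \<in> R} = {1..d j}" for j
    unfolding d_def
  proof (rule downward_closed_eq_atLeastAtMost)
    show "finite {i. (i, j) \<in> R}"
      by (rule finite_subset[of _ "{..<j}"]) (auto dest: R)
    show "1 \<le> i" if "i \<in> {i. (i, j) \<in> R}" for i
      using R that by blast
    show "i' \<in> {i. (i, j) \<in> R}" if "i \<in> {i. (i, j) \<in> R}" "1 \<le> i'" "i' \<le> i" for i i'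
      using R R_mono that by blast
  qed
  have top: "(d j, j) \<in> R" if "d j \<noteq> 0" for j
    using column[of j] that by auto
  show ?thesis
  proof
    show "d j < j" if "j \<in> {1..n}" for j
      using top[of j] R[of "d j" j] that by (cases "d j = 0") auto
    show "d j \<le> d j'" if "1 \<le> j" "j \<le> j'" "j' \<le> n" for j j'
    proof (cases "d j = 0")
      case False
      then have "d j \<in> {i. (i, j') \<in> R}"
        using R_mono[OF top[OF False], of "d j" j'] that by simp
      then show ?thesis
        using column[of j'] by simp
    qed simp
    show "R = {(i, j). 1 \<le> i \<and> i \<le> d j \<and> j \<in> {1..n}}"
      using column R by fastforce
  qed
qed

lemma staircase_eq_path_order:
  assumes "staircase n R"
  obtains E where "dyck n E" "path_order n E = R"
proof -
  obtain d where less: "\<And>j. j \<in> {1..n} \<Longrightarrow> d j < j"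
    and mono: "\<And>j j'. 1 \<le> j \<Longrightarrow> j \<le> j' \<Longrightarrow> j' \<le> n \<Longrightarrow> d j \<le> d j'"
    and R: "R = {(i, j). 1 \<le> i \<and> i \<le> d j \<and> j \<in> {1..n}}"
    using staircase_columns[OF assms] by blast
  have "dyck n (item_word (staircase_key d) n)"
    by (rule path_order_staircase_word(1)[OF less mono])
  moreover have "path_order n (item_word (staircase_key d) n) = R"
    unfolding R by (rule path_order_staircase_word(2)[OF less mono])
  ultimately show ?thesis
    by (rule that)
qed

lemma a_map_path_order:
  assumes "dyck n E"
  shows "a_map n (path_order n E) = E"
  unfolding a_map_def
proof (rule the_equality)
  have "area_set n E = {(i, j). 1 \<le> i \<and> i < j \<and> j \<le> n \<and> (i, j) \<notin> path_order n E}"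
    unfolding path_order_def area_set_def by auto
  with assms show
    "dyck n E \<and> area_set n E = {(i, j). 1 \<le> i \<and> i < j \<and> j \<le> n \<and> (i, j) \<notin> path_order n E}"
    by simp
  fix E' assume E':
    "dyck n E' \<and> area_set n E' = {(i, j). 1 \<le> i \<and> i < j \<and> j \<le> n \<and> (i, j) \<notin> path_order n E}"
  then have "area_set n E' = area_set n E"
    unfolding path_order_def area_set_def by auto
  then have "area_seq n E' = area_seq n E"
    unfolding area_seq_def by simp
  show "E' = E"
  proof (rule dyck_eqI)
    fix r assume "1 \<le> r" "r \<le> n"
    then show "up_x E' r = up_x E r"
      using up_x_eq_area_seq[of n E' r] up_x_eq_area_seq[OF assms, of r] E'
        \<open>area_seq n E' = area_seq n E\<close>
      by simp
  qed (use E' assms in auto)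
qed

section \<open>Bijectivity of zeta\<close>

lemma part_poset_iso_path_order_zeta:
  assumes "dyck n D"
  shows "poset_iso n (part_poset n (area_seq n D)) (path_order n (zeta D))"
  unfolding zeta_eq_area_word[OF assms] poset_iso_iff_via
  using part_poset_iso_path_order_area_word by blast

lemma zeta_inj:
  assumes "1 \<le> n" "dyck n D" "dyck n D'" "zeta D = zeta D'"
  shows "D = D'"
proof (rule dyck_eq_if_part_poset_iso[OF assms(1-3)])
  have "poset_iso n (path_order n (zeta D)) (part_poset n (area_seq n D'))"
    using poset_iso_sym[OF part_poset_iso_path_order_zeta[OF assms(3)]] assms(4) by simp
  then show "poset_iso n (part_poset n (area_seq n D)) (part_poset n (area_seq n D'))"
    by (rule poset_iso_trans[OF part_poset_iso_path_order_zeta[OF assms(2)]])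
qed

lemma zeta_surj:
  assumes "1 \<le> n" "dyck n E"
  obtains D where "dyck n D" "zeta D = E"
proof -
  have "zeta ` {D. dyck n D} \<subseteq> {D. dyck n D}"
  proof (rule image_subsetI)
    fix D assume "D \<in> {D. dyck n D}"
    then show "zeta D \<in> {D. dyck n D}"
      using zeta_eq_area_word[of n D] dyck_area_word by simp
  qed
  moreover have "inj_on zeta {D. dyck n D}"
  proof (rule inj_onI)
    fix D D' assume "D \<in> {D. dyck n D}" "D' \<in> {D. dyck n D}" "zeta D = zeta D'"
    then have "dyck n D" "dyck n D'" "zeta D = zeta D'"
      by simp_all
    then show "D = D'"
      by (rule zeta_inj[OF assms(1)])
  qed
  ultimately have "zeta ` {D. dyck n D} = {D. dyck n D}"
    by (rule endo_inj_surj[OF finite_dyck])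
  then have "E \<in> zeta ` {D. dyck n D}"
    using assms(2) by simp
  then show ?thesis
    using that by blast
qed

lemma p_map_eqI:
  assumes "1 \<le> n" "dyck n D" "poset_iso n (part_poset n (area_seq n D)) U"
  shows "p_map n U = D"
  unfolding p_map_def
proof (rule the_equality)
  show "dyck n D \<and> poset_iso n (part_poset n (area_seq n D)) U"
    using assms(2,3) ..
  fix D' assume D': "dyck n D' \<and> poset_iso n (part_poset n (area_seq n D')) U"
  then show "D' = D"
    using dyck_eq_if_part_poset_iso[OF assms(1), of D' D]
      poset_iso_trans[OF _ poset_iso_sym[OF assms(3)]]
      assms(2) by blast
qed

theorem mainTheorem1:
  fixes n :: nat and U :: "(nat \<times> nat) set"
  assumes "n \<ge> 1" and "unit_interval_order n U"
  shows "a_map n U = zeta (p_map n U)"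
proof -
  obtain E where E: "dyck n E" "path_order n E = U"
    using staircase_eq_path_order[OF staircase_unit_interval_order[OF assms(2)]] .
  obtain D where D: "dyck n D" "zeta D = E"
    using zeta_surj[OF assms(1) E(1)] .
  have "p_map n U = D"
    using p_map_eqI[OF assms(1) D(1)] part_poset_iso_path_order_zeta[OF D(1)] D(2) E(2) by simp
  moreover have "a_map n U = E"
    using a_map_path_order[OF E(1)] E(2) by simp
  ultimately show ?thesis
    using D(2) by simp
qed

end
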